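(* For $n\ge0$ let $A(n)$ be the number of partitions of $n$ into parts congruent to $0,2,3,4$ or $7$ modulo $8$, and let $B(n)$ be the number of partitions of $n$ in which every part is at least $2$ and every odd part exceeds every other part not exceeding it by at least $3$ (i.e. if $b$ is an odd part and $c\le b$ is any other part, then $b-c\ge3$). Then $A(n)=B(n)$ for all $n\ge0$. *)

theory Defs
  imports Main "HOL-Library.Multiset"
begin

definition partitions :: "nat \<Rightarrow> nat multiset set" where
  "partitions n = {p. (\<forall>x\<in>#p. 0 < x) \<and> sum_mset p = n}"

definition A_count :: "nat \<Rightarrow> nat" where
  "A_count n = card {p \<in> partitions n. \<forall>x\<in>#p. x mod 8 \<in> {0,2,3,4,7}}"

text \<open>B(n): partitions of n with all parts at least 2, such that for every odd part b
  and every other part c (another element of the multiset, i.e. p minus one copy of b)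
  with c \<le> b we have b - c \<ge> 3.\<close>
definition B_count :: "nat \<Rightarrow> nat" where
  "B_count n = card {p \<in> partitions n. (\<forall>x\<in>#p. 2 \<le> x) \<and>
      (\<forall>b\<in>#p. odd b \<longrightarrow> (\<forall>c\<in>#(p - {#b#}). c \<le> b \<longrightarrow> c + 3 \<le> b))}"

end

theory Submission
  imports Defs "HOL-Computational_Algebra.Formal_Power_Series"
begin

unbundle fps_syntax

text \<open>
  Since
  1/(1 - q^(4i+3)) = (1 + q^(4i+3))/(1 - q^(8i+6)), the generating function of A is
  E(q) \<cdot> \<Prod>i. (1 + q^(4i+3)), where E(q) = \<Prod>j\<ge>1. 1/(1 - q^(2j)) counts partitions into even parts.
  In a partition counted by B the odd parts form a set S of odd numbers \<ge> 3 with mutual gaps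
  \<ge> 4, and the even parts are arbitrary except that b - 1 is forbidden for every b \<in> S; hence the
  generating function of B is E(q) \<cdot> \<Sum>S. \<Prod>b\<in>S. (q^b - q^(2b-1)).
  It remains to identify the last sum with \<Prod>i. (1 + q^(4i+3)). Its truncations gap_sum K
  (odd parts at most 2K+1) satisfy
    gap_sum (K+2) = gap_sum (K+1) + (q^(2K+5) - q^(4K+9)) gap_sum K.
  This recurrence is also solved by an explicit sum whose c-th term is the c-th elementary symmetric function of
  q^3, q^7, q^11, \<dots> times a product of factors 1 - q^m with large m; modulo q^(4a+4) these factors
  disappear, so gap_sum (2a+1) agrees with \<Prod>i\<le>a. (1 + q^(4i+3)) up to that order.
\<close>

section \<open>Geometric series and partitions with prescribed parts\<close>

definition geom_fps :: "nat \<Rightarrow> int fps" where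
  "geom_fps k = Abs_fps (\<lambda>i. if k dvd i then 1 else 0)"

lemma geom_fps_unfold:
  assumes "0 < k"
  shows "geom_fps k = 1 + fps_X ^ k * geom_fps k"
proof (rule fps_ext)
  fix n
  show "geom_fps k $ n = (1 + fps_X ^ k * geom_fps k) $ n"
  proof (cases "n < k")
    case True
    then have "k dvd n \<longleftrightarrow> n = 0" using assms by (auto dest: dvd_imp_le)
    then show ?thesis using True by (simp add: geom_fps_def fps_X_power_mult_nth)
  next
    case False
    then have "k dvd n \<longleftrightarrow> k dvd (n - k)" by (simp add: dvd_minus_self)
    then show ?thesis using False assms by (simp add: geom_fps_def fps_X_power_mult_nth)
  qed
qed

lemma geom_fps_inverse:
  assumes "0 < k"
  shows "(1 - fps_X ^ k) * geom_fps k = 1"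
proof -
  have "(1 - fps_X ^ k) * geom_fps k = geom_fps k - fps_X ^ k * geom_fps k"
    by (simp add: algebra_simps)
  also have "\<dots> = 1" by (subst (1) geom_fps_unfold[OF assms]) simp
  finally show ?thesis .
qed

lemma geom_fps_double:
  assumes "0 < k"
  shows "geom_fps k = geom_fps (2 * k) * (1 + fps_X ^ k)"
proof -
  have "fps_X ^ (2 * k) = fps_X ^ k * (fps_X ^ k :: int fps)"
    by (simp add: mult_2 power_add)
  then have "1 - fps_X ^ (2 * k) = (1 - fps_X ^ k) * (1 + (fps_X ^ k :: int fps))"
    by (simp add: algebra_simps)
  then have "geom_fps k = geom_fps k * ((1 - fps_X ^ k) * (1 + fps_X ^ k) * geom_fps (2 * k))"
    using geom_fps_inverse[of "2 * k"] assms by simp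
  also have "\<dots> = ((1 - fps_X ^ k) * geom_fps k) * (geom_fps (2 * k) * (1 + fps_X ^ k))"
    by (simp add: algebra_simps)
  finally show ?thesis using geom_fps_inverse[OF assms] by simp
qed

lemma fps_X_power_dvd_iff: "fps_X ^ d dvd f \<longleftrightarrow> (\<forall>i<d. f $ i = 0)"
proof
  assume "fps_X ^ d dvd f"
  then obtain g where "f = fps_X ^ d * g" by (elim dvdE)
  then show "\<forall>i<d. f $ i = 0" by (simp add: fps_X_power_mult_nth)
next
  assume "\<forall>i<d. f $ i = 0"
  then have "f = fps_X ^ d * fps_shift d f"
    by (intro fps_conv_fps_X_power_mult_fps_shift) (auto intro: subdegree_geI)
  then show "fps_X ^ d dvd f" by (metis dvd_triv_left)
qed

definition parts_in :: "nat set \<Rightarrow> nat \<Rightarrow> nat multiset set" where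
  "parts_in K n = {E. set_mset E \<subseteq> K \<and> sum_mset E = n}"

lemma member_le_sum_mset: "x \<in># E \<Longrightarrow> x \<le> sum_mset (E :: nat multiset)"
  by (metis le_add1 multi_member_split sum_mset.add_mset)

lemma finite_parts_in:
  assumes "0 \<notin> K"
  shows "finite (parts_in K n)"
proof (rule finite_subset)
  show "parts_in K n \<subseteq> (\<Union>m\<le>n. multisets_of_size {1..n} m)"
  proof
    fix E assume E: "E \<in> parts_in K n"
    then have "\<forall>x\<in>#E. 1 \<le> x" using assms by (auto simp: parts_in_def Suc_le_eq intro!: gr0I)
    then have "size E \<le> sum_mset E" by (induction E) auto
    moreover have "set_mset E \<subseteq> {1..n}"
      using \<open>\<forall>x\<in>#E. 1 \<le> x\<close> E member_le_sum_mset by (fastforce simp: parts_in_def)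
    ultimately show "E \<in> (\<Union>m\<le>n. multisets_of_size {1..n} m)"
      using E by (auto simp: multisets_of_size_def parts_in_def)
  qed
qed auto

lemma card_parts_in_insert:
  assumes "k \<notin> K" "0 < k" "0 \<notin> K"
  shows "card (parts_in (insert k K) n) =
    card (parts_in K n) + (if k \<le> n then card (parts_in (insert k K) (n - k)) else 0)"
proof -
  define B where "B = {E \<in> parts_in (insert k K) n. k \<in># E}"
  have split: "parts_in (insert k K) n = parts_in K n \<union> B"
    by (auto simp: parts_in_def B_def)
  have B: "B = add_mset k ` parts_in (insert k K) (n - k)" if "k \<le> n"
  proof
    show "B \<subseteq> add_mset k ` parts_in (insert k K) (n - k)"
    proof
      fix E assume "E \<in> B"
      then have "E = add_mset k (E - {#k#})" "E - {#k#} \<in> parts_in (insert k K) (n - k)"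
        by (auto simp: B_def parts_in_def insert_DiffM dest: in_diffD)
          (metis add_diff_cancel_left' insert_DiffM sum_mset.add_mset)
      then show "E \<in> add_mset k ` parts_in (insert k K) (n - k)" by blast
    qed
  qed (use that in \<open>auto simp: B_def parts_in_def\<close>)
  have "B = {}" if "\<not> k \<le> n"
    using that member_le_sum_mset by (fastforce simp: B_def parts_in_def)
  then have "card B = (if k \<le> n then card (parts_in (insert k K) (n - k)) else 0)"
    using B by (simp add: card_image inj_on_def)
  moreover have "finite B"
    using finite_parts_in[of "insert k K" n] assms by (simp add: B_def)
  moreover have "parts_in K n \<inter> B = {}"
    using assms(1) by (auto simp: B_def parts_in_def)
  ultimately show ?thesis
    unfolding split using finite_parts_in[OF assms(3)] by (simp add: card_Un_disjoint)
qed

lemma coeff_prod_geom_fps: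
  assumes "finite K" "0 \<notin> K"
  shows "(\<Prod>k\<in>K. geom_fps k) $ n = int (card (parts_in K n))"
  using assms
proof (induction K arbitrary: n rule: finite_induct)
  case empty
  have "parts_in {} n = (if n = 0 then {{#}} else {})" by (auto simp: parts_in_def)
  then show ?case by simp
next
  case (insert k K)
  then have k: "0 < k" and K: "0 \<notin> K" by auto
  define G where "G = geom_fps k * (\<Prod>k\<in>K. geom_fps k)"
  have G: "G = (\<Prod>k\<in>K. geom_fps k) + fps_X ^ k * G"
    unfolding G_def by (subst (1) geom_fps_unfold[OF k]) (simp add: algebra_simps)
  have "G $ m = int (card (parts_in (insert k K) m))" for m
  proof (induction m rule: less_induct)
    case (less m)
    have "G $ m = (\<Prod>k\<in>K. geom_fps k) $ m + (if m < k then 0 else G $ (m - k))"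
      by (subst G) (simp add: fps_X_power_mult_nth)
    also have "\<dots> = int (card (parts_in (insert k K) m))"
      using insert.IH[OF K] less k card_parts_in_insert[OF insert.hyps(2) k K, of m] by auto
    finally show ?case .
  qed
  then show ?case using insert.hyps by (simp add: G_def)
qed

section \<open>Elementary symmetric functions\<close>

text \<open>esym a c is the c-th elementary symmetric polynomial of X^3, X^7, ..., X^(4a-1).\<close>
fun esym :: "nat \<Rightarrow> nat \<Rightarrow> int fps" where
  "esym 0 c = (if c = 0 then 1 else 0)"
| "esym (Suc a) 0 = 1"
| "esym (Suc a) (Suc c) = esym a (Suc c) + fps_X ^ (4 * a + 3) * esym a c"

lemma esym_0_right [simp]: "esym a 0 = 1"
  by (cases a) auto

lemma esym_eq_0: "a < c \<Longrightarrow> esym a c = 0"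
proof (induction a arbitrary: c)
  case (Suc a)
  then show ?case by (cases c) auto
qed simp

lemma prod_eq_sum_esym: "(\<Prod>i<a. 1 + fps_X ^ (4 * i + 3)) = (\<Sum>c\<le>a. esym a c)"
proof (induction a)
  case (Suc a)
  have "(\<Sum>c\<le>Suc a. esym (Suc a) c) = 1 + (\<Sum>c\<le>a. esym a (Suc c)) + fps_X ^ (4 * a + 3) * (\<Sum>c\<le>a. esym a c)"
    by (simp add: sum.atMost_Suc_shift sum.distrib sum_distrib_left del: sum.atMost_Suc)
  also have "1 + (\<Sum>c\<le>a. esym a (Suc c)) = (\<Sum>c\<le>Suc a. esym a c)"
    by (simp add: sum.atMost_Suc_shift del: sum.atMost_Suc)
  also have "\<dots> = (\<Sum>c\<le>a. esym a c)"
    by (simp add: esym_eq_0)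
  finally show ?case using Suc by (simp add: algebra_simps)
qed simp

lemma fps_X_power_dvd_esym: "fps_X ^ (4 * c + 3) dvd esym a (Suc c)"
proof (induction a arbitrary: c)
  case (Suc a)
  have "fps_X ^ (4 * c + 3) dvd fps_X ^ (4 * a + 3) * esym a c"
  proof (cases c)
    case (Suc c')
    then have "fps_X ^ (4 * c + 3) dvd fps_X ^ (4 * a + 3) * fps_X ^ (4 * c' + 3)" if "c \<le> a"
      using that by (simp add: le_imp_power_dvd flip: power_add)
    then show ?thesis
      using Suc.IH[of c'] \<open>c = Suc c'\<close>
      by (cases "c \<le> a") (auto simp: esym_eq_0 intro: dvd_trans mult_dvd_mono)
  qed (simp add: le_imp_power_dvd)
  then show ?case using Suc.IH by simp
qed simp

text \<open>With q = X^4 one has esym b c = X^(2c^2+c) \<cdot> [b choose c]_q, and this is the ratio of two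
  consecutive q-binomial coefficients.\<close>
lemma esym_Suc_Suc_ratio:
  "esym (Suc b) (Suc c) * (1 - fps_X ^ (4 * c + 4)) =
     fps_X ^ (4 * c + 3) * (1 - fps_X ^ (4 * b + 4)) * esym b c"
proof (induction b arbitrary: c)
  case 0
  then show ?case by (cases c) (auto simp: algebra_simps)
next
  case (Suc b)
  define B where "B = (fps_X :: int fps) ^ (4 * b)"
  have rec: "esym (Suc (Suc b)) (Suc c) = esym (Suc b) (Suc c) + B * fps_X ^ 7 * esym (Suc b) c"
    by (simp add: B_def flip: power_add)
  show ?case
  proof (cases c)
    case 0
    have "esym (Suc b) 1 * (1 - fps_X ^ 4) = fps_X ^ 3 * (1 - B * fps_X ^ 4)"
      using Suc.IH[of 0] by (simp add: B_def flip: power_add)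
    moreover have "esym (Suc (Suc b)) 1 = esym (Suc b) 1 + B * fps_X ^ 7"
      using rec 0 by simp
    ultimately have "esym (Suc (Suc b)) 1 * (1 - fps_X ^ 4) = fps_X ^ 3 * (1 - B * fps_X ^ 8)"
      by algebra
    then show ?thesis
      by (simp add: 0 B_def flip: power_add)
  next
    case (Suc c')
    define a where "a = (fps_X :: int fps) ^ (4 * c')"
    define x3 x4 x7 x8 where "x3 = (fps_X :: int fps) ^ 3" "x4 = (fps_X :: int fps) ^ 4"
      "x7 = (fps_X :: int fps) ^ 7" "x8 = (fps_X :: int fps) ^ 8"
    have pw: "fps_X ^ (4 * c' + 4) = a * x4" "fps_X ^ (4 * c' + 3) = a * x3"
      "fps_X ^ (4 * c + 4) = a * x8" "fps_X ^ (4 * c + 3) = a * x7"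
      "fps_X ^ (4 * b + 4) = B * x4" "fps_X ^ (4 * b + 3) = B * x3"
      "fps_X ^ (4 * Suc b + 4) = B * x8" "fps_X ^ 7 = x7"
      by (simp_all add: Suc a_def B_def x3_x4_x7_x8_def flip: power_add)
    have IH1: "esym (Suc b) (Suc c) * (1 - a * x8) = a * x7 * (1 - B * x4) * esym b c"
      using Suc.IH[of c] unfolding pw .
    have IH2: "esym (Suc b) c * (1 - a * x4) = a * x3 * (1 - B * x4) * esym b c'"
      using Suc.IH[of c'] unfolding pw Suc[symmetric] .
    have rec': "esym (Suc b) c = esym b c + B * x3 * esym b c'"
      using Suc by (simp add: pw(6))
    have "esym (Suc (Suc b)) (Suc c) * (1 - a * x8) = a * x7 * (1 - B * x8) * esym (Suc b) c"
      using IH1 IH2 rec[unfolded pw] rec' by algebra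
    then show ?thesis unfolding pw .
  qed
qed

section \<open>Odd parts with gaps and the closed form of their series\<close>

definition gap_sets :: "nat \<Rightarrow> nat set set" where
  "gap_sets K = {S. S \<subseteq> {3..2 * K + 1} \<and> (\<forall>x\<in>S. odd x) \<and> (\<forall>x\<in>S. \<forall>y\<in>S. x < y \<longrightarrow> x + 4 \<le> y)}"

definition gap_sum :: "nat \<Rightarrow> int fps" where
  "gap_sum K = (\<Sum>S\<in>gap_sets K. \<Prod>b\<in>S. fps_X ^ b - fps_X ^ (2 * b - 1))"

lemma finite_gap_sets: "finite (gap_sets K)"
  by (rule finite_subset[of _ "Pow {3..2 * K + 1}"]) (auto simp: gap_sets_def)

lemma finite_gap_set: "S \<in> gap_sets K \<Longrightarrow> finite S"
  unfolding gap_sets_def by (auto intro: finite_subset)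

lemma gap_set_le: "S \<in> gap_sets K \<Longrightarrow> x \<in> S \<Longrightarrow> x \<le> 2 * K + 1"
  by (auto simp: gap_sets_def)

lemma gap_sets_Suc_Suc: "gap_sets (K + 2) = gap_sets (K + 1) \<union> insert (2 * K + 5) ` gap_sets K"
proof (intro equalityI subsetI)
  fix S assume S: "S \<in> gap_sets (K + 2)"
  show "S \<in> gap_sets (K + 1) \<union> insert (2 * K + 5) ` gap_sets K"
  proof (cases "2 * K + 5 \<in> S")
    case False
    have "x \<le> 2 * K + 3" if "x \<in> S" for x
    proof -
      have "odd x" "x \<le> 2 * K + 5" "x \<noteq> 2 * K + 5" using S False that by (auto simp: gap_sets_def)
      then show ?thesis by presburger
    qed
    then have "S \<in> gap_sets (K + 1)" using S by (fastforce simp: gap_sets_def)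
    then show ?thesis by blast
  next
    case True
    then have "x \<le> 2 * K + 1" if "x \<in> S - {2 * K + 5}" for x
      using S that by (force simp: gap_sets_def)
    then have "S - {2 * K + 5} \<in> gap_sets K" using S by (fastforce simp: gap_sets_def)
    then show ?thesis using True by (metis UnI2 image_eqI insert_Diff)
  qed
next
  fix S assume "S \<in> gap_sets (K + 1) \<union> insert (2 * K + 5) ` gap_sets K"
  then show "S \<in> gap_sets (K + 2)"
    by (auto simp: gap_sets_def)
qed

lemma gap_sum_Suc_Suc:
  "gap_sum (K + 2) = gap_sum (K + 1) + (fps_X ^ (2 * K + 5) - fps_X ^ (4 * K + 9)) * gap_sum K"
proof -
  let ?f = "\<lambda>S. \<Prod>b\<in>S. (fps_X :: int fps) ^ b - fps_X ^ (2 * b - 1)"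
  have new: "2 * K + 5 \<notin> S" if "S \<in> gap_sets K" for S
    using gap_set_le[OF that] by force
  have "gap_sets (K + 1) \<inter> insert (2 * K + 5) ` gap_sets K = {}"
    using gap_set_le[of _ "K + 1" "2 * K + 5"] by force
  then have "gap_sum (K + 2) = gap_sum (K + 1) + sum ?f (insert (2 * K + 5) ` gap_sets K)"
    unfolding gap_sum_def gap_sets_Suc_Suc by (simp add: sum.union_disjoint finite_gap_sets)
  also have "sum ?f (insert (2 * K + 5) ` gap_sets K) = (\<Sum>S\<in>gap_sets K. ?f (insert (2 * K + 5) S))"
    by (rule sum.reindex_cong[of "insert (2 * K + 5)"]) (auto intro!: inj_onI dest: new insert_ident)
  also have "\<dots> = (\<Sum>S\<in>gap_sets K. (fps_X ^ (2 * K + 5) - fps_X ^ (4 * K + 9)) * ?f S)"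
    by (intro sum.cong refl) (simp add: new finite_gap_set)
  finally show ?thesis by (simp add: gap_sum_def sum_distrib_left)
qed

lemma gap_sum_0: "gap_sum 0 = 1"
proof -
  have "gap_sets 0 = {{}}" by (auto simp: gap_sets_def)
  then show ?thesis by (simp add: gap_sum_def)
qed

lemma gap_sum_1: "gap_sum 1 = 1 + fps_X ^ 3 - fps_X ^ 5"
proof -
  have "gap_sets 1 = {{}, {3}}" by (auto simp: gap_sets_def)
  then show ?thesis by (simp add: gap_sum_def)
qed

text \<open>The c-th term of the closed form of gap_sum K. Whenever esym is nonzero, c \<le> (K + 1) div 2,
  so the truncated subtraction in the exponent never reaches 0.\<close>
definition gap_term :: "nat \<Rightarrow> nat \<Rightarrow> int fps" where
  "gap_term K c = esym ((K + 1) div 2) c * (\<Prod>i<c. 1 - fps_X ^ (4 * (K div 2) + 2 - 4 * i))"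

lemma gap_term_0_right [simp]: "gap_term K 0 = 1"
  by (simp add: gap_term_def)

lemma gap_term_eq_0: "K < c \<Longrightarrow> gap_term K c = 0"
  by (simp add: gap_term_def esym_eq_0)

lemma prod_one_minus_shift:
  "(\<Prod>i<Suc c. 1 - (fps_X :: int fps) ^ (4 * b + 6 - 4 * i)) =
     (1 - fps_X ^ (4 * b + 6)) * (\<Prod>i<c. 1 - fps_X ^ (4 * b + 2 - 4 * i))"
proof -
  have "\<And>i. 4 * b + 6 - 4 * Suc i = 4 * b + 2 - 4 * i" by simp
  then show ?thesis by (simp add: prod.lessThan_Suc_shift del: prod.lessThan_Suc)
qed

lemma gap_term_even_Suc:
  "gap_term (2 * b + 2) (Suc c) =
     gap_term (2 * b + 1) (Suc c) + (fps_X ^ (4 * b + 5) - fps_X ^ (8 * b + 9)) * gap_term (2 * b) c"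
proof -
  define Q where "Q = (\<Prod>i<c. 1 - (fps_X :: int fps) ^ (4 * b + 2 - 4 * i))"
  have even: "gap_term (2 * b + 2) (Suc c) = esym (Suc b) (Suc c) * ((1 - fps_X ^ (4 * b + 6)) * Q)"
  proof -
    have "(2 * b + 2 + 1) div 2 = Suc b" "4 * ((2 * b + 2) div 2) + 2 = 4 * b + 6" by simp_all
    then show ?thesis by (simp only: gap_term_def prod_one_minus_shift Q_def)
  qed
  have odd: "gap_term (2 * b + 1) (Suc c) = esym (Suc b) (Suc c) * (Q * (1 - fps_X ^ (4 * b + 2 - 4 * c)))"
    by (simp add: gap_term_def Q_def)
  have lower: "gap_term (2 * b) c = esym b c * Q"
    by (simp add: gap_term_def Q_def)
  show ?thesis
  proof (cases "c \<le> b")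
    case True
    define y where "y = (fps_X :: int fps) ^ (4 * b + 2 - 4 * c)"
    have pw: "fps_X ^ (4 * b + 6) = y * fps_X ^ (4 * c + 4)" "fps_X ^ (4 * b + 5) = y * fps_X ^ (4 * c + 3)"
      "fps_X ^ (8 * b + 9) = y * fps_X ^ (4 * c + 3) * fps_X ^ (4 * b + 4)"
      using True by (simp_all add: y_def flip: power_add)
    have "gap_term (2 * b + 2) (Suc c) - gap_term (2 * b + 1) (Suc c) =
        y * Q * (esym (Suc b) (Suc c) * (1 - fps_X ^ (4 * c + 4)))"
      unfolding even odd pw y_def[symmetric] by (simp add: algebra_simps)
    also have "\<dots> = (fps_X ^ (4 * b + 5) - fps_X ^ (8 * b + 9)) * gap_term (2 * b) c"
      unfolding esym_Suc_Suc_ratio lower pw by (simp add: algebra_simps)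
    finally show ?thesis by (simp add: algebra_simps)
  next
    case False
    then show ?thesis unfolding even odd lower by (simp add: esym_eq_0)
  qed
qed

lemma gap_term_odd_Suc:
  "gap_term (2 * b + 3) (Suc c) =
     gap_term (2 * b + 2) (Suc c) + (fps_X ^ (4 * b + 7) - fps_X ^ (8 * b + 13)) * gap_term (2 * b + 1) c"
proof -
  define Q where "Q = (\<Prod>i<c. 1 - (fps_X :: int fps) ^ (4 * b + 2 - 4 * i))"
  have "(2 * b + 3 + 1) div 2 = Suc (Suc b)" "(2 * b + 2 + 1) div 2 = Suc b" "(2 * b + 1 + 1) div 2 = Suc b"
    "4 * ((2 * b + 3) div 2) + 2 = 4 * b + 6" "4 * ((2 * b + 2) div 2) + 2 = 4 * b + 6"
    "(2 * b + 1) div 2 = b"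
    by simp_all
  then have terms: "gap_term (2 * b + 3) (Suc c) = esym (Suc (Suc b)) (Suc c) * ((1 - fps_X ^ (4 * b + 6)) * Q)"
    "gap_term (2 * b + 2) (Suc c) = esym (Suc b) (Suc c) * ((1 - fps_X ^ (4 * b + 6)) * Q)"
    "gap_term (2 * b + 1) c = esym (Suc b) c * Q"
    by (simp_all only: gap_term_def prod_one_minus_shift Q_def)
  have rec: "esym (Suc (Suc b)) (Suc c) = esym (Suc b) (Suc c) + fps_X ^ (4 * b + 7) * esym (Suc b) c"
    by (simp only: esym.simps) simp
  have pw: "fps_X ^ (8 * b + 13) = fps_X ^ (4 * b + 7) * (fps_X ^ (4 * b + 6) :: int fps)"
    by (simp flip: power_add)
  show ?thesis unfolding terms rec pw by (simp add: algebra_simps del: esym.simps)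
qed

lemma gap_term_Suc_Suc:
  "gap_term (K + 2) (Suc c) =
     gap_term (K + 1) (Suc c) + (fps_X ^ (2 * K + 5) - fps_X ^ (4 * K + 9)) * gap_term K c"
proof (cases "even K")
  case True
  then obtain b where "K = 2 * b" by (elim evenE)
  moreover have "2 * (2 * b) + 5 = 4 * b + 5" "4 * (2 * b) + 9 = 8 * b + 9" by simp_all
  ultimately show ?thesis using gap_term_even_Suc[of b c] by simp
next
  case False
  then obtain b where "K = 2 * b + 1" by (elim oddE)
  moreover have "2 * b + 1 + 2 = 2 * b + 3" "2 * b + 1 + 1 = 2 * b + 2"
    "2 * (2 * b + 1) + 5 = 4 * b + 7" "4 * (2 * b + 1) + 9 = 8 * b + 13" by simp_all
  ultimately show ?thesis using gap_term_odd_Suc[of b c] by (simp only:)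
qed

lemma sum_gap_term_extend: "K \<le> N \<Longrightarrow> (\<Sum>c\<le>N. gap_term K c) = (\<Sum>c\<le>K. gap_term K c)"
  by (rule sum.mono_neutral_right) (auto simp: gap_term_eq_0)

lemma sum_gap_term_Suc_Suc:
  "(\<Sum>c\<le>K + 2. gap_term (K + 2) c) =
     (\<Sum>c\<le>K + 1. gap_term (K + 1) c) + (fps_X ^ (2 * K + 5) - fps_X ^ (4 * K + 9)) * (\<Sum>c\<le>K. gap_term K c)"
proof -
  let ?m = "fps_X ^ (2 * K + 5) - fps_X ^ (4 * K + 9) :: int fps"
  have "(\<Sum>c\<le>K + 2. gap_term (K + 2) c) = 1 + (\<Sum>c\<le>K + 1. gap_term (K + 2) (Suc c))"
    by (simp add: sum.atMost_Suc_shift del: sum.atMost_Suc)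
  also have "(\<Sum>c\<le>K + 1. gap_term (K + 2) (Suc c)) = (\<Sum>c\<le>K + 1. gap_term (K + 1) (Suc c) + ?m * gap_term K c)"
    by (intro sum.cong refl gap_term_Suc_Suc)
  also have "1 + \<dots> = 1 + (\<Sum>c\<le>K + 1. gap_term (K + 1) (Suc c)) + ?m * (\<Sum>c\<le>K + 1. gap_term K c)"
    by (simp only: sum.distrib sum_distrib_left add.assoc)
  also have "1 + (\<Sum>c\<le>K + 1. gap_term (K + 1) (Suc c)) = (\<Sum>c\<le>K + 2. gap_term (K + 1) c)"
    by (simp add: sum.atMost_Suc_shift del: sum.atMost_Suc)
  finally show ?thesis
    using sum_gap_term_extend[of "K + 1" "K + 2"] sum_gap_term_extend[of K "K + 1"] by simp
qed

lemma gap_sum_eq_sum_gap_term: "gap_sum K = (\<Sum>c\<le>K. gap_term K c)"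
proof -
  have "gap_sum K = (\<Sum>c\<le>K. gap_term K c) \<and> gap_sum (K + 1) = (\<Sum>c\<le>K + 1. gap_term (K + 1) c)"
  proof (induction K)
    case 0
    have "gap_term 1 1 = fps_X ^ 3 - fps_X ^ 5"
      by (simp add: gap_term_def numeral_eq_Suc algebra_simps flip: power_add)
    then show ?case using gap_sum_0 gap_sum_1[unfolded One_nat_def] by simp
  next
    case (Suc K)
    then show ?case using gap_sum_Suc_Suc[of K] sum_gap_term_Suc_Suc[of K] by simp
  qed
  then show ?thesis ..
qed

lemma dvd_prod_one_minus_sub_one:
  fixes f :: "'b \<Rightarrow> 'a :: comm_ring_1"
  assumes "\<And>i. i \<in> A \<Longrightarrow> p dvd f i"
  shows "p dvd (\<Prod>i\<in>A. 1 - f i) - 1"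
  using assms
proof (induction A rule: infinite_finite_induct)
  case (insert i A)
  have "(\<Prod>i\<in>insert i A. 1 - f i) - 1 = ((\<Prod>i\<in>A. 1 - f i) - 1) - f i * (\<Prod>i\<in>A. 1 - f i)"
    using insert.hyps by (simp add: algebra_simps)
  also have "p dvd \<dots>"
    using insert by (auto intro: dvd_diff[of p "(\<Prod>i\<in>A. 1 - f i) - 1"] dvd_mult2)
  finally show ?case .
qed simp_all

lemma gap_sum_congruent_prod:
  "fps_X ^ (4 * a + 4) dvd gap_sum (2 * a + 1) - (\<Prod>i\<le>a. 1 + fps_X ^ (4 * i + 3))"
proof -
  have "(\<Prod>i\<le>a. 1 + fps_X ^ (4 * i + 3)) = (\<Sum>c\<le>2 * a + 1. esym (Suc a) c)"
    unfolding lessThan_Suc_atMost[symmetric] prod_eq_sum_esym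
    by (rule sum.mono_neutral_left) (auto simp: esym_eq_0)
  then have "gap_sum (2 * a + 1) - (\<Prod>i\<le>a. 1 + fps_X ^ (4 * i + 3)) =
      (\<Sum>c\<le>2 * a + 1. esym (Suc a) c * ((\<Prod>i<c. 1 - fps_X ^ (4 * a + 2 - 4 * i)) - 1))"
    by (simp add: gap_sum_eq_sum_gap_term gap_term_def sum_subtractf algebra_simps)
  also have "fps_X ^ (4 * a + 4) dvd \<dots>"
  proof (intro dvd_sum)
    fix c
    show "fps_X ^ (4 * a + 4) dvd esym (Suc a) c * ((\<Prod>i<c. 1 - fps_X ^ (4 * a + 2 - 4 * i)) - 1)"
    proof (cases c)
      case (Suc c')
      show ?thesis
      proof (cases "c' \<le> a")
        case True
        have "fps_X ^ (4 * a + 2 - 4 * c') dvd (\<Prod>i<c. 1 - fps_X ^ (4 * a + 2 - 4 * i)) - (1 :: int fps)"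
          by (rule dvd_prod_one_minus_sub_one) (auto simp: Suc le_imp_power_dvd)
        with fps_X_power_dvd_esym[of c' "Suc a"]
        have "fps_X ^ (4 * c' + 3) * fps_X ^ (4 * a + 2 - 4 * c') dvd
            esym (Suc a) c * ((\<Prod>i<c. 1 - fps_X ^ (4 * a + 2 - 4 * i)) - 1)"
          unfolding Suc by (rule mult_dvd_mono)
        moreover have "fps_X ^ (4 * a + 4) dvd fps_X ^ (4 * c' + 3) * (fps_X ^ (4 * a + 2 - 4 * c') :: int fps)"
          using True by (simp add: le_imp_power_dvd flip: power_add)
        ultimately show ?thesis by (rule dvd_trans[rotated])
      qed (simp add: Suc esym_eq_0)
    qed simp
  qed
  finally show ?thesis .
qed

section \<open>The generating function of A\<close>

definition even_parts :: "nat \<Rightarrow> nat set" where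
  "even_parts N = {e. even e \<and> 2 \<le> e \<and> e \<le> N}"

lemma finite_even_parts: "finite (even_parts N)"
  by (rule finite_subset[of _ "{..N}"]) (auto simp: even_parts_def)

lemma zero_notin_even_parts: "0 \<notin> even_parts N"
  by (simp add: even_parts_def)

lemma partitions_with_parts_in:
  assumes "0 \<notin> K" and "\<And>x. 0 < x \<Longrightarrow> x \<le> n \<Longrightarrow> x \<in> K \<longleftrightarrow> P x"
  shows "{p \<in> partitions n. \<forall>x\<in>#p. P x} = parts_in K n"
proof (intro equalityI subsetI)
  fix p assume "p \<in> {p \<in> partitions n. \<forall>x\<in>#p. P x}"
  then have "\<forall>x\<in>#p. 0 < x \<and> P x" "sum_mset p = n" by (auto simp: partitions_def)
  then show "p \<in> parts_in K n"
    using assms(2) member_le_sum_mset by (auto simp: parts_in_def)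
next
  fix p assume p: "p \<in> parts_in K n"
  then have "\<forall>x\<in>#p. 0 < x" using assms(1) by (auto simp: parts_in_def intro!: gr0I)
  then show "p \<in> {p \<in> partitions n. \<forall>x\<in>#p. P x}"
    using p assms(2) member_le_sum_mset by (auto simp: partitions_def parts_in_def)
qed

definition A_parts :: "nat \<Rightarrow> nat set" where
  "A_parts a = {e \<in> even_parts (8 * a + 6). e mod 8 \<noteq> 6} \<union> (\<lambda>i. 4 * i + 3) ` {..a}"

lemma mem_A_parts_iff:
  assumes "0 < x" "x \<le> a"
  shows "x \<in> A_parts a \<longleftrightarrow> x mod 8 \<in> {0, 2, 3, 4, 7}"
proof
  assume "x \<in> A_parts a"
  then consider "even x" "x mod 8 \<noteq> 6" | i where "x = 4 * i + 3"
    by (auto simp: A_parts_def even_parts_def)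
  then show "x mod 8 \<in> {0, 2, 3, 4, 7}"
    by cases (simp_all, presburger+)
next
  assume "x mod 8 \<in> {0, 2, 3, 4, 7}"
  then have x: "x mod 8 = 0 \<or> x mod 8 = 2 \<or> x mod 8 = 3 \<or> x mod 8 = 4 \<or> x mod 8 = 7" by simp
  show "x \<in> A_parts a"
  proof (cases "odd x")
    case True
    then have "x = 4 * (x div 4) + 3" using x by presburger
    moreover have "x div 4 \<le> a" using assms by linarith
    ultimately show ?thesis unfolding A_parts_def by blast
  next
    case False
    then have "2 \<le> x" "x mod 8 \<noteq> 6" using assms x by presburger+
    then show ?thesis using False assms by (simp add: A_parts_def even_parts_def)
  qed
qed

lemma even_parts_mod_8_eq_6: "{e \<in> even_parts (8 * a + 6). e mod 8 = 6} = (\<lambda>i. 8 * i + 6) ` {..a}"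
proof (intro equalityI subsetI)
  fix e assume e: "e \<in> {e \<in> even_parts (8 * a + 6). e mod 8 = 6}"
  moreover have "e = 8 * (e div 8) + e mod 8" by simp
  ultimately have "e = 8 * (e div 8) + 6" "e div 8 \<le> a" by (auto simp: even_parts_def)
  then show "e \<in> (\<lambda>i. 8 * i + 6) ` {..a}" by blast
qed (auto simp: even_parts_def)

lemma prod_geom_fps_A_parts:
  "(\<Prod>k\<in>A_parts a. geom_fps k) =
     (\<Prod>e\<in>even_parts (8 * a + 6). geom_fps e) * (\<Prod>i\<le>a. 1 + fps_X ^ (4 * i + 3))"
proof -
  let ?E = "{e \<in> even_parts (8 * a + 6). e mod 8 \<noteq> 6}"
  have inj: "inj_on (\<lambda>i. 4 * i + 3) {..a}" "inj_on (\<lambda>i. 8 * i + 6) {..a}"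
    by (auto simp: inj_on_def)
  have "(\<Prod>k\<in>(\<lambda>i. 4 * i + 3) ` {..a}. geom_fps k) = (\<Prod>i\<le>a. geom_fps (8 * i + 6) * (1 + fps_X ^ (4 * i + 3)))"
    using geom_fps_double[of "4 * _ + 3"] by (simp add: prod.reindex[OF inj(1)])
  also have "\<dots> = (\<Prod>k\<in>{e \<in> even_parts (8 * a + 6). e mod 8 = 6}. geom_fps k) * (\<Prod>i\<le>a. 1 + fps_X ^ (4 * i + 3))"
    by (simp add: prod.distrib even_parts_mod_8_eq_6 prod.reindex[OF inj(2)])
  finally have odd: "(\<Prod>k\<in>(\<lambda>i. 4 * i + 3) ` {..a}. geom_fps k) = \<dots>" .
  have "(\<Prod>k\<in>A_parts a. geom_fps k) = (\<Prod>k\<in>?E. geom_fps k) * (\<Prod>k\<in>(\<lambda>i. 4 * i + 3) ` {..a}. geom_fps k)"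
    unfolding A_parts_def by (intro prod.union_disjoint) (auto simp: finite_even_parts even_parts_def)
  moreover have "(\<Prod>k\<in>?E. geom_fps k) * (\<Prod>k\<in>{e \<in> even_parts (8 * a + 6). e mod 8 = 6}. geom_fps k) =
      (\<Prod>e\<in>even_parts (8 * a + 6). geom_fps e)"
  proof -
    have "(\<Prod>k\<in>?E. geom_fps k) * (\<Prod>k\<in>{e \<in> even_parts (8 * a + 6). e mod 8 = 6}. geom_fps k) =
        (\<Prod>k\<in>?E \<union> {e \<in> even_parts (8 * a + 6). e mod 8 = 6}. geom_fps k)"
      by (rule prod.union_disjoint[symmetric]) (auto simp: finite_even_parts)
    also have "?E \<union> {e \<in> even_parts (8 * a + 6). e mod 8 = 6} = even_parts (8 * a + 6)"
      by auto
    finally show ?thesis .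
  qed
  ultimately show ?thesis unfolding odd by (simp add: mult.assoc)
qed

lemma A_count_coeff:
  "int (A_count n) = ((\<Prod>e\<in>even_parts (8 * n + 6). geom_fps e) * (\<Prod>i\<le>n. 1 + fps_X ^ (4 * i + 3))) $ n"
proof -
  have "0 \<notin> A_parts n" "finite (A_parts n)"
    by (auto simp: A_parts_def even_parts_def finite_even_parts)
  then show ?thesis
    unfolding A_count_def prod_geom_fps_A_parts[symmetric]
    by (simp add: partitions_with_parts_in[where K = "A_parts n"] mem_A_parts_iff coeff_prod_geom_fps)
qed

section \<open>The generating function of B\<close>

definition B_partition :: "nat multiset \<Rightarrow> bool" where
  "B_partition p \<longleftrightarrow>
     (\<forall>x\<in>#p. 2 \<le> x) \<and> (\<forall>b\<in>#p. odd b \<longrightarrow> (\<forall>c\<in>#p - {#b#}. c \<le> b \<longrightarrow> c + 3 \<le> b))"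

text \<open>An even part c \<le> b violates c + 3 \<le> b exactly when c = b - 1, so these are the even parts
  that may accompany the set S of odd parts.\<close>
definition admissible_evens :: "nat \<Rightarrow> nat set \<Rightarrow> nat set" where
  "admissible_evens N S = even_parts N - (\<lambda>b. b - 1) ` S"

definition even_completions :: "nat \<Rightarrow> nat \<Rightarrow> nat set \<Rightarrow> nat multiset set" where
  "even_completions N n S = {E. set_mset E \<subseteq> admissible_evens N S \<and> sum_mset E + (\<Sum>b\<in>S. b) = n}"

lemma sum_mset_mset_set: "sum_mset (mset_set S) = (\<Sum>b\<in>S. b)"
  by (simp add: sum_unfold_sum_mset)

lemma B_partition_other_part:
  assumes "B_partition p" "b \<in># p" "odd b" "c \<in># p" "c \<noteq> b" "c \<le> b"
  shows "c + 3 \<le> b"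
proof -
  have "c \<in># p - {#b#}" using assms(4,5) by (simp add: in_diff_count)
  then show ?thesis using assms by (auto simp: B_partition_def)
qed

lemma B_partition_odd_parts_distinct:
  assumes "B_partition p"
  shows "mset_set (set_mset (filter_mset odd p)) = filter_mset odd p"
proof (rule multiset_eqI)
  fix b
  have "count p b = 1" if "b \<in># p" "odd b"
  proof (rule ccontr)
    assume "count p b \<noteq> 1"
    moreover have "0 < count p b" using that(1) by simp
    ultimately have "1 < count p b" by linarith
    then have "b \<in># p - {#b#}" by (simp add: in_diff_count)
    then have "b + 3 \<le> b" using assms that unfolding B_partition_def by blast
    then show False by simp
  qed
  then show "count (mset_set (set_mset (filter_mset odd p))) b = count (filter_mset odd p) b"
    by (auto simp: count_mset_set' not_in_iff)
qed

lemma B_partition_split: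
  assumes "B_partition p"
  shows "p = mset_set (set_mset (filter_mset odd p)) + filter_mset even p"
  using multiset_partition[of p odd] B_partition_odd_parts_distinct[OF assms] by simp

lemma B_partition_odd_parts:
  assumes "B_partition p" "sum_mset p \<le> 2 * K + 1"
  shows "set_mset (filter_mset odd p) \<in> gap_sets K"
proof -
  have "3 \<le> x \<and> x \<le> 2 * K + 1" if "x \<in># p" "odd x" for x
  proof -
    have "2 \<le> x" "x \<le> 2 * K + 1"
      using that assms member_le_sum_mset[of x p] by (auto simp: B_partition_def)
    then show ?thesis using \<open>odd x\<close> by presburger
  qed
  moreover have "x + 4 \<le> y" if "x \<in># p" "y \<in># p" "odd x" "odd y" "x < y" for x y
    using B_partition_other_part[OF assms(1) that(2,4,1)] that by presburger
  ultimately show ?thesis by (auto simp: gap_sets_def)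
qed

lemma B_partition_even_parts:
  assumes "B_partition p" "sum_mset p \<le> N"
  shows "set_mset (filter_mset even p) \<subseteq> admissible_evens N (set_mset (filter_mset odd p))"
proof
  fix e assume "e \<in># filter_mset even p"
  then have e: "e \<in># p" "even e" by auto
  have "e \<noteq> b - 1" if "b \<in># p" "odd b" for b
    using B_partition_other_part[OF assms(1) that e(1)] e(2) that(2) by (cases b) auto
  moreover have "e \<in> even_parts N"
    using e assms member_le_sum_mset[OF e(1)] by (auto simp: even_parts_def B_partition_def)
  ultimately show "e \<in> admissible_evens N (set_mset (filter_mset odd p))"
    by (auto simp: admissible_evens_def)
qed

lemma B_partition_mset_set_plus:
  assumes "S \<in> gap_sets K" "set_mset E \<subseteq> admissible_evens N S"
  shows "B_partition (mset_set S + E)"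
proof -
  have S: "finite S" "\<And>x. x \<in> S \<Longrightarrow> odd x \<and> 3 \<le> x" "\<And>x y. x \<in> S \<Longrightarrow> y \<in> S \<Longrightarrow> x < y \<Longrightarrow> x + 4 \<le> y"
    using assms(1) finite_gap_set by (auto simp: gap_sets_def)
  have E: "\<And>x. x \<in># E \<Longrightarrow> even x \<and> 2 \<le> x \<and> x + 1 \<notin> S"
    using assms(2) by (force simp: admissible_evens_def even_parts_def)
  have "\<forall>b\<in>#mset_set S + E. odd b \<longrightarrow> (\<forall>c\<in>#mset_set S + E - {#b#}. c \<le> b \<longrightarrow> c + 3 \<le> b)"
  proof (intro ballI impI)
    fix b c assume b: "b \<in># mset_set S + E" "odd b" and c: "c \<in># mset_set S + E - {#b#}" "c \<le> b"
    have "b \<in> S" using b E S(1) by auto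
    show "c + 3 \<le> b"
    proof (cases "c \<in># E")
      case True
      then have "even c" "c + 1 \<noteq> b" using E[of c] \<open>b \<in> S\<close> by auto
      then show ?thesis using \<open>c \<le> b\<close> \<open>odd b\<close> by presburger
    next
      case False
      then have "c \<in> S" "c \<noteq> b"
        using c(1) S(1) by (auto simp: in_diff_count count_mset_set' not_in_iff split: if_splits)
      then show ?thesis using S(3) \<open>b \<in> S\<close> c(2) by force
    qed
  qed
  moreover have "\<forall>x\<in>#mset_set S + E. 2 \<le> x"
    using S E by force
  ultimately show ?thesis by (simp add: B_partition_def)
qed

lemma B_partitions_eq_Union:
  assumes "n \<le> N" "n \<le> 2 * K + 1"
  shows "{p \<in> partitions n. B_partition p} = (\<Union>S\<in>gap_sets K. (\<lambda>E. mset_set S + E) ` even_completions N n S)"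
proof (intro equalityI subsetI)
  fix p assume "p \<in> {p \<in> partitions n. B_partition p}"
  then have p: "B_partition p" "sum_mset p = n" by (auto simp: partitions_def)
  define S where "S = set_mset (filter_mset odd p)"
  have split: "p = mset_set S + filter_mset even p"
    unfolding S_def by (rule B_partition_split[OF p(1)])
  have "sum_mset (filter_mset even p) + (\<Sum>b\<in>S. b) = n"
    using p(2) split by (metis add.commute sum_mset.union sum_mset_mset_set)
  then have "filter_mset even p \<in> even_completions N n S"
    using B_partition_even_parts[of p N] p assms by (simp add: even_completions_def S_def)
  moreover have "S \<in> gap_sets K"
    unfolding S_def using B_partition_odd_parts[of p K] p assms by simp
  ultimately show "p \<in> (\<Union>S\<in>gap_sets K. (\<lambda>E. mset_set S + E) ` even_completions N n S)"
    using split by blast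
next
  fix p assume "p \<in> (\<Union>S\<in>gap_sets K. (\<lambda>E. mset_set S + E) ` even_completions N n S)"
  then obtain S E where S: "S \<in> gap_sets K" and E: "E \<in> even_completions N n S" and p: "p = mset_set S + E"
    by blast
  have "B_partition p"
    using E p by (auto simp: even_completions_def intro: B_partition_mset_set_plus[OF S])
  moreover have "sum_mset p = n"
    using E p by (simp add: even_completions_def sum_mset_mset_set)
  ultimately show "p \<in> {p \<in> partitions n. B_partition p}"
    by (auto simp: partitions_def B_partition_def)
qed

lemma filter_odd_mset_set_plus_evens:
  assumes "finite S" "\<forall>x\<in>S. odd x" "\<forall>x\<in>#E. even x"
  shows "filter_mset odd (mset_set S + E) = mset_set S"
proof -
  have "filter_mset odd E = {#}" using assms(3) by simp
  moreover have "filter_mset odd (mset_set S) = mset_set S" using assms(1,2) by (auto simp: filter_mset_eq_conv)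
  ultimately show ?thesis by simp
qed

lemma finite_even_completions: "finite (even_completions N n S)"
proof (rule finite_subset)
  show "even_completions N n S \<subseteq> parts_in (admissible_evens N S) (n - (\<Sum>b\<in>S. b))"
    by (auto simp: even_completions_def parts_in_def)
qed (simp add: finite_parts_in admissible_evens_def zero_notin_even_parts)

lemma card_B_partitions:
  assumes "n \<le> N" "n \<le> 2 * K + 1"
  shows "card {p \<in> partitions n. B_partition p} = (\<Sum>S\<in>gap_sets K. card (even_completions N n S))"
proof -
  have odd_part: "filter_mset odd (mset_set S + E) = mset_set S"
    if "S \<in> gap_sets K" "E \<in> even_completions N n S" for S E
    using that finite_gap_set[OF that(1)]
    by (intro filter_odd_mset_set_plus_evens)
      (auto simp: gap_sets_def even_completions_def admissible_evens_def even_parts_def)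
  have "card {p \<in> partitions n. B_partition p} = (\<Sum>S\<in>gap_sets K. card ((\<lambda>E. mset_set S + E) ` even_completions N n S))"
    unfolding B_partitions_eq_Union[OF assms]
  proof (rule card_UN_disjoint[OF finite_gap_sets])
    show "\<forall>S\<in>gap_sets K. finite ((\<lambda>E. mset_set S + E) ` even_completions N n S)"
      by (simp add: finite_even_completions)
    show "\<forall>S\<in>gap_sets K. \<forall>T\<in>gap_sets K. S \<noteq> T \<longrightarrow>
        (\<lambda>E. mset_set S + E) ` even_completions N n S \<inter> (\<lambda>E. mset_set T + E) ` even_completions N n T = {}"
    proof (intro ballI impI)
      fix S T assume S: "S \<in> gap_sets K" and T: "T \<in> gap_sets K" and "S \<noteq> T"
      have "mset_set S \<noteq> mset_set T"
        using finite_gap_set[OF S] finite_gap_set[OF T] \<open>S \<noteq> T\<close> by (metis finite_set_mset_mset_set)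
      then show "(\<lambda>E. mset_set S + E) ` even_completions N n S \<inter> (\<lambda>E. mset_set T + E) ` even_completions N n T = {}"
        using odd_part[OF S] odd_part[OF T] by fastforce
    qed
  qed
  also have "\<dots> = (\<Sum>S\<in>gap_sets K. card (even_completions N n S))"
    by (intro sum.cong refl card_image) (simp add: inj_on_def)
  finally show ?thesis .
qed

lemma card_even_completions_coeff:
  "int (card (even_completions N n S)) = (fps_X ^ (\<Sum>b\<in>S. b) * (\<Prod>e\<in>admissible_evens N S. geom_fps e)) $ n"
proof -
  have "finite (admissible_evens N S)" "0 \<notin> admissible_evens N S"
    by (simp_all add: admissible_evens_def finite_even_parts zero_notin_even_parts)
  moreover have "even_completions N n S =
      (if (\<Sum>b\<in>S. b) \<le> n then parts_in (admissible_evens N S) (n - (\<Sum>b\<in>S. b)) else {})"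
    by (auto simp: even_completions_def parts_in_def)
  ultimately show ?thesis by (simp add: fps_X_power_mult_nth coeff_prod_geom_fps)
qed

lemma prod_geom_fps_admissible_evens:
  assumes S: "S \<in> gap_sets K" and "2 * K \<le> N"
  shows "fps_X ^ (\<Sum>b\<in>S. b) * (\<Prod>e\<in>admissible_evens N S. geom_fps e) =
    (\<Prod>e\<in>even_parts N. geom_fps e) * (\<Prod>b\<in>S. fps_X ^ b - fps_X ^ (2 * b - 1))"
proof -
  have b: "odd b" "3 \<le> b" "b \<le> 2 * K + 1" if "b \<in> S" for b
    using S that by (auto simp: gap_sets_def)
  have sub: "(\<lambda>b. b - 1) ` S \<subseteq> even_parts N"
    using b assms(2) by (fastforce simp: even_parts_def)
  have inj: "inj_on (\<lambda>b. b - 1) S"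
    using b by (force intro!: inj_onI)
  have "(\<Prod>e\<in>even_parts N. geom_fps e) = (\<Prod>e\<in>admissible_evens N S. geom_fps e) * (\<Prod>b\<in>S. geom_fps (b - 1))"
    unfolding admissible_evens_def prod.subset_diff[OF sub finite_even_parts] prod.reindex[OF inj] by simp
  moreover have "(\<Prod>b\<in>S. geom_fps (b - 1)) * (\<Prod>b\<in>S. fps_X ^ b - fps_X ^ (2 * b - 1)) = fps_X ^ (\<Sum>b\<in>S. b)"
  proof -
    have "geom_fps (b - 1) * (fps_X ^ b - fps_X ^ (2 * b - 1)) = fps_X ^ b" if "b \<in> S" for b
    proof -
      have pw: "fps_X ^ (2 * b - 1) = fps_X ^ b * (fps_X ^ (b - 1) :: int fps)"
        using b[OF that] by (simp flip: power_add)
      have "geom_fps (b - 1) * (fps_X ^ b - fps_X ^ (2 * b - 1)) = fps_X ^ b * ((1 - fps_X ^ (b - 1)) * geom_fps (b - 1))"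
        unfolding pw by (simp add: algebra_simps)
      also have "\<dots> = fps_X ^ b" using geom_fps_inverse[of "b - 1"] b[OF that] by simp
      finally show ?thesis .
    qed
    then show ?thesis by (simp add: power_sum flip: prod.distrib)
  qed
  ultimately show ?thesis by (simp add: algebra_simps)
qed

lemma B_count_coeff:
  "int (B_count n) = ((\<Prod>e\<in>even_parts (8 * n + 6). geom_fps e) * gap_sum (2 * n + 1)) $ n"
proof -
  have "B_count n = card {p \<in> partitions n. B_partition p}"
    by (simp add: B_count_def B_partition_def)
  also have "\<dots> = (\<Sum>S\<in>gap_sets (2 * n + 1). card (even_completions (8 * n + 6) n S))"
    by (rule card_B_partitions) simp_all
  finally have "int (B_count n) =
      (\<Sum>S\<in>gap_sets (2 * n + 1). ((\<Prod>e\<in>even_parts (8 * n + 6). geom_fps e) * (\<Prod>b\<in>S. fps_X ^ b - fps_X ^ (2 * b - 1))) $ n)"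
    by (simp add: card_even_completions_coeff prod_geom_fps_admissible_evens)
  then show ?thesis by (simp add: gap_sum_def sum_distrib_left fps_sum_nth)
qed

theorem corollary17:
  shows "\<forall>n. A_count n = B_count n"
proof
  fix n
  let ?P = "\<Prod>e\<in>even_parts (8 * n + 6). geom_fps e"
  let ?T = "\<Prod>i\<le>n. 1 + fps_X ^ (4 * i + 3)"
  have "fps_X ^ (n + 1) dvd fps_X ^ (4 * n + 4)"
    by (rule le_imp_power_dvd) simp
  then have "fps_X ^ (n + 1) dvd ?P * (gap_sum (2 * n + 1) - ?T)"
    using gap_sum_congruent_prod[of n] by (auto intro: dvd_trans dvd_mult)
  then have "(?P * (gap_sum (2 * n + 1) - ?T)) $ n = 0"
    unfolding fps_X_power_dvd_iff by simp
  then have "int (B_count n) = int (A_count n)"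
    unfolding A_count_coeff B_count_coeff by (simp add: algebra_simps)
  then show "A_count n = B_count n" by simp
qed

end
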